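(* Let $\mu\in P(\mathbb{R})$ be a measure that is not a Dirac measure, and write $N_\mu=(\mathbb{R}\setminus\operatorname{conv}(C_\mu))\cup\bigcup_{j} I_j$, where the $I_j$ are the bounded connected components of $N_\mu$ (a disjoint union; the union of the unbounded components of $N_\mu$ equals $\mathbb{R}\setminus\operatorname{conv}(C_\mu)$). Then $$\{\mu\}^1\setminus\Delta=\{\nu\in P(\mathbb{R})\setminus\Delta : \nu(\mathbb{R}\setminus\operatorname{conv}(C_\mu))=1\}\ \cup\ \bigcup_{j}\{\nu\in P(\mathbb{R})\setminus\Delta : \nu(I_j)=1\}.$$
   Context: $P(\mathbb{R})$ is the set of Borel probability measures on $\mathbb{R}$ with the Kuiper distance $d_{Ku}(\mu,\nu)=\sup\{|\mu(I)-\nu(I)| : I\text{ a non-degenerate interval}\}$. $\Delta$ is the set of Dirac measures $\delta_x$ ($x\in\mathbb{R}$). $\{\mu\}^1=\{\nu\in P(\mathbb{R}) : d_{Ku}(\mu,\nu)=1\}$. $N_\mu$ is the union of all non-degenerate intervals $I$ with $\mu(I)=0$, and $C_\mu=\mathbb{R}\setminus N_\mu$ (the co-interval support). $\operatorname{conv}$ denotes convex hull. *)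

theory Defs
  imports "HOL-Probability.Probability"
begin

definition Prob_R :: "real measure set" where
  "Prob_R = {M. prob_space M \<and> sets M = sets (borel :: real measure)}"

definition Dirac_set :: "real measure set" where
  "Dirac_set = {return borel x | x :: real. True}"

definition nondeg_interval :: "real set \<Rightarrow> bool" where
  "nondeg_interval I \<longleftrightarrow> is_interval I \<and> (\<exists>a b. a \<in> I \<and> b \<in> I \<and> a < b)"

definition d_Ku :: "real measure \<Rightarrow> real measure \<Rightarrow> real" where
  "d_Ku \<mu> \<nu> = (SUP I \<in> {I. nondeg_interval I}. \<bar>measure \<mu> I - measure \<nu> I\<bar>)"

definition unit_sphere_Ku :: "real measure \<Rightarrow> real measure set" where
  "unit_sphere_Ku \<mu> = {\<nu> \<in> Prob_R. d_Ku \<mu> \<nu> = 1}"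

definition N_set :: "real measure \<Rightarrow> real set" where
  "N_set \<mu> = \<Union> {I. nondeg_interval I \<and> measure \<mu> I = 0}"

definition C_set :: "real measure \<Rightarrow> real set" where
  "C_set \<mu> = UNIV - N_set \<mu>"

end

theory Submission
  imports Defs
begin

text \<open>The set N_set \<mu> is \<mu>-null, since it is covered by countably many null intervals reaching
from a point to a rational; hence \<mu> lives on C_set \<mu> and on its convex hull. If d_Ku \<mu> \<nu> = 1,
there are intervals almost full for one measure and almost empty for the other. If they are almost
full for \<nu>, Borel-Cantelli along intervals with defects 2^-n makes their liminf a \<mu>-null interval
carrying all of \<nu>; it lies in a component of N_set \<mu>, which is either bounded or outside the convex
hull of C_set \<mu>. If they are almost full for \<mu>, they eventually contain any two points of
C_set \<mu>, so \<nu> vanishes on the convex hull. Conversely, each described \<nu> is singular to \<mu> on a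
non-degenerate interval.\<close>

lemma Prob_R_D:
  assumes "M \<in> Prob_R"
  shows "prob_space M" "sets M = sets borel" "space M = UNIV"
  using assms unfolding Prob_R_def by (auto dest: sets_eq_imp_space_eq)

lemma Prob_R_measure_le_1: "M \<in> Prob_R \<Longrightarrow> measure M A \<le> 1"
  using prob_space.prob_le_1[OF Prob_R_D(1)] by simp

lemma Prob_R_measure_mono:
  assumes M: "M \<in> Prob_R" and "A \<subseteq> B" "B \<in> sets borel"
  shows "measure M A \<le> measure M B"
proof (cases "A \<in> sets borel")
  case True
  then show ?thesis using assms Prob_R_D[OF M]
    by (intro finite_measure.finite_measure_mono) (auto simp: prob_space_def)
next
  case False
  then show ?thesis using Prob_R_D(2)[OF M] by (simp add: measure_notin_sets)
qed

lemma Prob_R_measure_compl: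
  assumes "M \<in> Prob_R" "A \<in> sets borel"
  shows "measure M (UNIV - A) = 1 - measure M A"
  using prob_space.prob_compl[OF Prob_R_D(1)[OF assms(1)], of A] Prob_R_D[OF assms(1)] assms(2)
  by simp

lemma Prob_R_measure_eq_1_mono:
  assumes "M \<in> Prob_R" "A \<subseteq> B" "B \<in> sets borel" "measure M A = 1"
  shows "measure M B = 1"
  using Prob_R_measure_mono[OF assms(1-3)] Prob_R_measure_le_1[OF assms(1), of B] assms(4)
  by linarith

lemma Prob_R_measure_eq_0_mono:
  assumes "M \<in> Prob_R" "A \<subseteq> B" "B \<in> sets borel" "measure M B = 0"
  shows "measure M A = 0"
  using Prob_R_measure_mono[OF assms(1-3)] measure_nonneg[of M A] assms(4) by linarith

lemma Prob_R_null_setsI: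
  assumes "M \<in> Prob_R" "A \<in> sets borel" "measure M A = 0"
  shows "A \<in> null_sets M"
proof -
  interpret prob_space M using Prob_R_D[OF assms(1)] by simp
  show ?thesis using assms Prob_R_D[OF assms(1)] by (simp add: emeasure_eq_measure null_sets_def)
qed

lemma Prob_R_measure_subset_null_set:
  assumes "M \<in> Prob_R" "A \<subseteq> Z" "Z \<in> null_sets M" "A \<in> sets borel"
  shows "measure M A = 0"
proof -
  have "A \<in> null_sets M"
    using null_sets_subset[OF assms(3)] assms(2,4) Prob_R_D(2)[OF assms(1)] by simp
  then show ?thesis by (simp add: measure_def null_setsD1)
qed

lemma Dirac_setI:
  assumes M: "M \<in> Prob_R" and "measure M {x} = 1"
  shows "M \<in> Dirac_set"
proof -
  interpret prob_space M using Prob_R_D[OF M] by simp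
  have "emeasure M B = emeasure (return borel x) B" if B: "B \<in> sets borel" for B
  proof (cases "x \<in> B")
    case True
    then have "measure M B = 1" using Prob_R_measure_eq_1_mono[OF M _ B, of "{x}"] assms(2) by simp
    then show ?thesis using True B Prob_R_D[OF M] by (simp add: emeasure_eq_measure)
  next
    case False
    then have "measure M B = 0"
      using Prob_R_measure_eq_0_mono[OF M, of B "UNIV - {x}"] Prob_R_measure_compl[OF M, of "{x}"]
        assms(2) by auto
    then show ?thesis using False B Prob_R_D[OF M] by (simp add: emeasure_eq_measure)
  qed
  then have "M = return borel x" using Prob_R_D[OF M] by (intro measure_eqI) auto
  then show ?thesis unfolding Dirac_set_def by auto
qed

lemma Prob_R_full_measure_two_points:
  assumes M: "M \<in> Prob_R" "M \<notin> Dirac_set" and A: "A \<in> sets borel" "measure M A = 1"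
  obtains a b where "a \<in> A" "b \<in> A" "a < b"
proof -
  have "A \<noteq> {}" using A by auto
  then obtain a where a: "a \<in> A" by auto
  have "\<not> A \<subseteq> {a}"
    using Dirac_setI[OF M(1)] Prob_R_measure_eq_1_mono[OF M(1) _ _ A(2), of "{a}"] M(2) by auto
  then obtain b where "b \<in> A" "b \<noteq> a" by auto
  then show ?thesis using a that by (metis linorder_neq_iff)
qed

lemma nondeg_interval_if_full_measure:
  assumes "M \<in> Prob_R" "M \<notin> Dirac_set" "is_interval J" "measure M J = 1"
  shows "nondeg_interval J"
proof -
  obtain a b where "a \<in> J" "b \<in> J" "a < b"
    using Prob_R_full_measure_two_points[OF assms(1,2) real_interval_borel_measurable[OF assms(3)] assms(4)] .
  then show ?thesis using assms(3) unfolding nondeg_interval_def by blast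
qed

lemma interval_covered_by_countable_subintervals:
  fixes S :: "real set"
  assumes S: "is_interval S"
  obtains E where "countable E" "E \<subseteq> S" "S \<subseteq> (\<Union>(a, b)\<in>E \<times> E. {a..b})"
proof -
  define E where "E = (S \<inter> \<rat>) \<union> {x\<in>S. \<forall>y\<in>S. x \<le> y} \<union> {x\<in>S. \<forall>y\<in>S. y \<le> x}"
  have subsingleton: "countable {x\<in>S. \<forall>y\<in>S. P x y}"
    if antisym: "\<And>x y. P x y \<Longrightarrow> P y x \<Longrightarrow> x = y" for P
  proof (cases "{x\<in>S. \<forall>y\<in>S. P x y} = {}")
    case False
    then obtain x where "x \<in> S" "\<forall>y\<in>S. P x y" by blast
    then have "{x\<in>S. \<forall>y\<in>S. P x y} \<subseteq> {x}" using antisym by blast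
    then show ?thesis by (rule countable_subset) simp
  qed (metis countable_empty)
  have "countable (S \<inter> \<rat>)" by (rule countable_subset[OF _ countable_rat]) auto
  moreover have "countable {x\<in>S. \<forall>y\<in>S. x \<le> y}" "countable {x\<in>S. \<forall>y\<in>S. y \<le> x}"
    by (rule subsingleton; simp)+
  ultimately have "countable E" unfolding E_def by simp
  moreover have "E \<subseteq> S" unfolding E_def by blast
  moreover have "S \<subseteq> (\<Union>(a, b)\<in>E \<times> E. {a..b})"
  proof
    fix x assume x: "x \<in> S"
    obtain a where a: "a \<in> E" "a \<le> x"
    proof (cases "\<exists>y\<in>S. y < x")
      case True
      then obtain y q where y: "y \<in> S" and q: "q \<in> \<rat>" "y < q" "q < x"
        using Rats_dense_in_real by blast
      then have "q \<in> S" using mem_is_interval_1_I[OF S y x] by simp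
      then show ?thesis using that[of q] q unfolding E_def by auto
    qed (use that x in \<open>auto simp: E_def not_less\<close>)
    obtain b where b: "b \<in> E" "x \<le> b"
    proof (cases "\<exists>y\<in>S. x < y")
      case True
      then obtain y q where y: "y \<in> S" and q: "q \<in> \<rat>" "x < q" "q < y"
        using Rats_dense_in_real by blast
      then have "q \<in> S" using mem_is_interval_1_I[OF S x y] by simp
      then show ?thesis using that[of q] q unfolding E_def by auto
    qed (use that x in \<open>auto simp: E_def not_less\<close>)
    show "x \<in> (\<Union>(a, b)\<in>E \<times> E. {a..b})" using a b by force
  qed
  ultimately show ?thesis using that by blast
qed

lemma measure_interval_eq_0I:
  fixes S :: "real set"
  assumes M: "M \<in> Prob_R" and S: "is_interval S"
    and null: "\<And>a b. a \<in> S \<Longrightarrow> b \<in> S \<Longrightarrow> measure M {a..b} = 0"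
  shows "measure M S = 0"
proof -
  obtain E where E: "countable E" "E \<subseteq> S" and cover: "S \<subseteq> (\<Union>(a, b)\<in>E \<times> E. {a..b})"
    using interval_covered_by_countable_subintervals[OF S] .
  have "(\<Union>(a, b)\<in>E \<times> E. {a..b}) \<in> null_sets M"
  proof (rule null_sets_UN')
    fix p assume p: "p \<in> E \<times> E"
    obtain a b where "p = (a, b)" by fastforce
    then have "measure M {a..b} = 0" using p E(2) null by blast
    then show "(case p of (a, b) \<Rightarrow> {a..b}) \<in> null_sets M"
      using Prob_R_null_setsI[OF M, of "{a..b}"] \<open>p = (a, b)\<close> by simp
  qed (use E(1) in simp)
  then show ?thesis
    using Prob_R_measure_subset_null_set[OF M cover _ real_interval_borel_measurable[OF S]] by simp
qed

lemma N_set_subset_null_set: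
  assumes M: "M \<in> Prob_R"
  obtains Z where "Z \<in> null_sets M" "N_set M \<subseteq> Z"
proof -
  \<comment> \<open>Every point of N_set M has a null interval reaching from it to a rational on one side.\<close>
  define L where "L q = {x. x \<le> q \<and> measure M {x..q} = 0}" for q :: real
  define R where "R q = {x. q \<le> x \<and> measure M {q..x} = 0}" for q :: real
  have "is_interval (L q)" for q
  proof (unfold is_interval_1, intro ballI allI impI)
    fix a b x assume "a \<in> L q" "b \<in> L q" "a \<le> x \<and> x \<le> b"
    then show "x \<in> L q"
      using Prob_R_measure_eq_0_mono[OF M, of "{x..q}" "{a..q}"] by (auto simp: L_def)
  qed
  moreover have "is_interval (R q)" for q
  proof (unfold is_interval_1, intro ballI allI impI)
    fix a b x assume "a \<in> R q" "b \<in> R q" "a \<le> x \<and> x \<le> b"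
    then show "x \<in> R q"
      using Prob_R_measure_eq_0_mono[OF M, of "{q..x}" "{q..b}"] by (auto simp: R_def)
  qed
  moreover have "measure M (L q) = 0" for q
    using \<open>is_interval (L q)\<close>
  proof (rule measure_interval_eq_0I[OF M])
    fix a b assume "a \<in> L q" "b \<in> L q"
    then show "measure M {a..b} = 0"
      using Prob_R_measure_eq_0_mono[OF M, of "{a..b}" "{a..q}"] by (auto simp: L_def)
  qed
  moreover have "measure M (R q) = 0" for q
    using \<open>is_interval (R q)\<close>
  proof (rule measure_interval_eq_0I[OF M])
    fix a b assume "a \<in> R q" "b \<in> R q"
    then show "measure M {a..b} = 0"
      using Prob_R_measure_eq_0_mono[OF M, of "{a..b}" "{q..b}"] by (auto simp: R_def)
  qed
  ultimately have "(\<Union>q\<in>\<rat>. L q \<union> R q) \<in> null_sets M"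
    using Prob_R_null_setsI[OF M real_interval_borel_measurable]
    by (intro null_sets_UN'[OF countable_rat] null_sets.Un) auto
  moreover have "N_set M \<subseteq> (\<Union>q\<in>\<rat>. L q \<union> R q)"
  proof
    fix x assume "x \<in> N_set M"
    then obtain I where I: "nondeg_interval I" "measure M I = 0" "x \<in> I"
      unfolding N_set_def by auto
    then obtain a b where "a \<in> I" "b \<in> I" "a < b" unfolding nondeg_interval_def by blast
    then obtain y where y: "y \<in> I" "y \<noteq> x" by (metis less_irrefl)
    have Ii: "is_interval I" "I \<in> sets borel"
      using I(1) real_interval_borel_measurable unfolding nondeg_interval_def by auto
    consider "x < y" | "y < x" using y(2) by linarith
    then show "x \<in> (\<Union>q\<in>\<rat>. L q \<union> R q)"
    proof cases
      case 1
      then obtain q where q: "q \<in> \<rat>" "x < q" "q < y" using Rats_dense_in_real by blast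
      have "{x..q} \<subseteq> I" using q by (auto intro: mem_is_interval_1_I[OF Ii(1) I(3) y(1)])
      then have "x \<in> L q" using q Prob_R_measure_eq_0_mono[OF M _ Ii(2) I(2)] by (auto simp: L_def)
      then show ?thesis using q by auto
    next
      case 2
      then obtain q where q: "q \<in> \<rat>" "y < q" "q < x" using Rats_dense_in_real by blast
      have "{q..x} \<subseteq> I" using q by (auto intro: mem_is_interval_1_I[OF Ii(1) y(1) I(3)])
      then have "x \<in> R q" using q Prob_R_measure_eq_0_mono[OF M _ Ii(2) I(2)] by (auto simp: R_def)
      then show ?thesis using q by auto
    qed
  qed
  ultimately show ?thesis using that by blast
qed

lemma measure_subset_N_set:
  assumes M: "M \<in> Prob_R" and "S \<subseteq> N_set M" "S \<in> sets borel"
  shows "measure M S = 0"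
proof -
  obtain Z where "Z \<in> null_sets M" "N_set M \<subseteq> Z" using N_set_subset_null_set[OF M] .
  then show ?thesis using Prob_R_measure_subset_null_set[OF M _ _ assms(3)] assms(2) by blast
qed

lemma C_set_contains_full_measure_set:
  assumes M: "M \<in> Prob_R"
  obtains A where "A \<in> sets borel" "A \<subseteq> C_set M" "measure M A = 1"
proof -
  obtain Z where Z: "Z \<in> null_sets M" "N_set M \<subseteq> Z" using N_set_subset_null_set[OF M] .
  have "Z \<in> sets borel" using Z(1) Prob_R_D(2)[OF M] null_setsD2 by blast
  moreover have "measure M Z = 0" using Prob_R_measure_subset_null_set[OF M subset_refl Z(1)] calculation .
  ultimately show ?thesis
    using that[of "UNIV - Z"] Z(2) Prob_R_measure_compl[OF M] unfolding C_set_def by auto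
qed

lemma convex_hull_C_set_interval: "is_interval (convex hull (C_set M))"
  by (simp add: is_interval_convex_1 convex_convex_hull)

lemma measure_convex_hull_C_set:
  assumes M: "M \<in> Prob_R"
  shows "measure M (convex hull (C_set M)) = 1"
proof -
  obtain A where A: "A \<in> sets borel" "A \<subseteq> C_set M" "measure M A = 1"
    using C_set_contains_full_measure_set[OF M] .
  have "A \<subseteq> convex hull (C_set M)" using A(2) hull_subset[of "C_set M"] by blast
  then show ?thesis
    using Prob_R_measure_eq_1_mono[OF M _ real_interval_borel_measurable[OF convex_hull_C_set_interval]]
      A(3) by blast
qed

lemma C_set_measure_pos:
  assumes "c \<in> C_set M"
  shows "measure M {..c} > 0" "measure M {c..} > 0"
proof -
  have "nondeg_interval {..c}"
    unfolding nondeg_interval_def by (intro conjI is_interval_ic exI[of _ "c - 1"] exI[of _ c]) auto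
  moreover have "nondeg_interval {c..}"
    unfolding nondeg_interval_def by (intro conjI is_interval_ci exI[of _ c] exI[of _ "c + 1"]) auto
  ultimately have "measure M {..c} \<noteq> 0" "measure M {c..} \<noteq> 0"
    using assms unfolding C_set_def N_set_def by blast+
  then show "measure M {..c} > 0" "measure M {c..} > 0"
    using measure_nonneg[of M "{..c}"] measure_nonneg[of M "{c..}"] by linarith+
qed

lemma convex_hull_real_between:
  fixes C :: "real set"
  assumes "x \<in> convex hull C"
  obtains c1 c2 where "c1 \<in> C" "c2 \<in> C" "c1 \<le> x" "x \<le> c2"
proof -
  let ?B = "{x. \<exists>c1\<in>C. \<exists>c2\<in>C. c1 \<le> x \<and> x \<le> c2}"
  have "is_interval ?B"
  proof (unfold is_interval_1, intro ballI allI impI)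
    fix a b y assume "a \<in> ?B" "b \<in> ?B" "a \<le> y \<and> y \<le> b"
    then show "y \<in> ?B" by (auto intro: order_trans)
  qed
  then have "convex hull C \<subseteq> ?B" by (intro hull_minimal) (auto simp: is_interval_convex_1)
  then show ?thesis using assms that by blast
qed

lemma unbounded_component_N_set_disjoint:
  assumes comp: "K \<in> components (N_set M)" and "\<not> bounded K"
  shows "K \<inter> convex hull (C_set M) = {}"
proof (rule ccontr)
  assume "K \<inter> convex hull (C_set M) \<noteq> {}"
  then obtain x where x: "x \<in> K" "x \<in> convex hull (C_set M)" by blast
  then obtain c1 c2 where c: "c1 \<in> C_set M" "c2 \<in> C_set M" "c1 \<le> x" "x \<le> c2"
    using convex_hull_real_between by blast
  have K: "is_interval K" "K \<inter> C_set M = {}"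
    using in_components_connected[OF comp] in_components_subset[OF comp] is_interval_connected_1
    unfolding C_set_def by auto
  obtain y where y: "y \<in> K" "y \<notin> {c1..c2}"
    using assms(2) bounded_closed_interval bounded_subset by blast
  have "c1 \<in> K \<or> c2 \<in> K"
  proof (cases "y < c1")
    case True
    then show ?thesis using mem_is_interval_1_I[OF K(1) y(1) x(1)] c(3) by simp
  next
    case False
    then have "c2 \<le> y" using y(2) by auto
    then show ?thesis using mem_is_interval_1_I[OF K(1) x(1) y(1)] c(4) by simp
  qed
  then show False using K(2) c(1,2) by blast
qed

lemma d_Ku_eq_1I:
  assumes M: "M \<in> Prob_R" and N: "N \<in> Prob_R"
    and I: "nondeg_interval I" "\<bar>measure M I - measure N I\<bar> = 1"
  shows "d_Ku M N = 1"
  unfolding d_Ku_def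
proof (rule cSup_eq_maximum)
  show "1 \<in> (\<lambda>I. \<bar>measure M I - measure N I\<bar>) ` {I. nondeg_interval I}"
    using I by (intro rev_image_eqI[of I]) auto
  fix y assume "y \<in> (\<lambda>I. \<bar>measure M I - measure N I\<bar>) ` {I. nondeg_interval I}"
  then obtain J where "y = \<bar>measure M J - measure N J\<bar>" by blast
  then show "y \<le> 1"
    using Prob_R_measure_le_1[OF M, of J] Prob_R_measure_le_1[OF N, of J]
      measure_nonneg[of M J] measure_nonneg[of N J] by linarith
qed

lemma d_Ku_eq_1D:
  assumes M: "M \<in> Prob_R" and N: "N \<in> Prob_R" and d: "d_Ku M N = 1"
  shows "(\<forall>e>0. \<exists>I. nondeg_interval I \<and> measure N I > 1 - e \<and> measure M I < e) \<or>
         (\<forall>e>0. \<exists>I. nondeg_interval I \<and> measure M I > 1 - e \<and> measure N I < e)"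
proof (rule ccontr)
  assume "\<not> ?thesis"
  then obtain e1 e2 where
      e1: "e1 > 0" "\<And>I. nondeg_interval I \<Longrightarrow> \<not> (measure N I > 1 - e1 \<and> measure M I < e1)"
    and e2: "e2 > 0" "\<And>I. nondeg_interval I \<Longrightarrow> \<not> (measure M I > 1 - e2 \<and> measure N I < e2)"
    by blast
  define e where "e = min e1 e2"
  have e: "e > 0" "e \<le> e1" "e \<le> e2" using e1(1) e2(1) unfolding e_def by auto
  have bound: "\<bar>measure M I - measure N I\<bar> \<le> 1 - e" if I: "nondeg_interval I" for I
    using e1(2)[OF I] e2(2)[OF I] e Prob_R_measure_le_1[OF M, of I] Prob_R_measure_le_1[OF N, of I]
      measure_nonneg[of M I] measure_nonneg[of N I] by linarith
  have "nondeg_interval {0..1::real}"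
    unfolding nondeg_interval_def by (intro conjI is_interval_cc exI[of _ 0] exI[of _ 1]) auto
  then have "d_Ku M N \<le> 1 - e" unfolding d_Ku_def by (intro cSUP_least) (auto intro: bound)
  then show False using d e(1) by simp
qed

lemma measure_interval_avoiding_point_le:
  assumes M: "M \<in> Prob_R" and I: "is_interval I" "c \<notin> I"
  shows "measure M I \<le> 1 - min (measure M {..c}) (measure M {c..})"
proof -
  have bound: "measure M I \<le> 1 - measure M A" if "I \<subseteq> UNIV - A" "A \<in> sets borel" for A
    using Prob_R_measure_mono[OF M that(1)] Prob_R_measure_compl[OF M that(2)] that(2) by simp
  have "I \<subseteq> UNIV - {..c} \<or> I \<subseteq> UNIV - {c..}"
  proof (rule ccontr)
    assume "\<not> ?thesis"
    then obtain y z where "y \<in> I" "z \<in> I" "y \<le> c" "c \<le> z" by auto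
    then have "c \<in> I" by (rule mem_is_interval_1_I[OF I(1)])
    then show False using I(2) by contradiction
  qed
  then show ?thesis using bound[of "{..c}"] bound[of "{c..}"] by auto
qed

lemma measure_between_C_set_points_eq_0:
  assumes M: "M \<in> Prob_R" and N: "N \<in> Prob_R"
    and far: "\<forall>e>0. \<exists>I. nondeg_interval I \<and> measure M I > 1 - e \<and> measure N I < e"
    and c: "c1 \<in> C_set M" "c2 \<in> C_set M"
  shows "measure N {c1..c2} = 0"
proof -
  \<comment> \<open>An interval carrying more than 1 - d of M must contain both c1 and c2.\<close>
  define d where
    "d = min (min (measure M {..c1}) (measure M {c1..})) (min (measure M {..c2}) (measure M {c2..}))"
  have d: "d > 0" unfolding d_def using C_set_measure_pos[OF c(1)] C_set_measure_pos[OF c(2)] by simp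
  have d_le: "d \<le> min (measure M {..c1}) (measure M {c1..})"
    "d \<le> min (measure M {..c2}) (measure M {c2..})"
    unfolding d_def by auto
  have small: "measure N {c1..c2} < e" if "e > 0" for e
  proof -
    have "min e d > 0" using d \<open>e > 0\<close> by simp
    then obtain I where I: "nondeg_interval I" "measure M I > 1 - min e d" "measure N I < min e d"
      using far by blast
    have Ii: "is_interval I" "I \<in> sets borel"
      using I(1) real_interval_borel_measurable unfolding nondeg_interval_def by auto
    have in_I: "c \<in> I" if "d \<le> min (measure M {..c}) (measure M {c..})" for c
    proof (rule ccontr)
      assume "c \<notin> I"
      moreover have "min e d \<le> d" by simp
      ultimately show False using measure_interval_avoiding_point_le[OF M Ii(1)] I(2) that by fastforce
    qed
    have "{c1..c2} \<subseteq> I"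
      using mem_is_interval_1_I[OF Ii(1) in_I[OF d_le(1)] in_I[OF d_le(2)]] by auto
    then have "measure N {c1..c2} \<le> measure N I" using Prob_R_measure_mono[OF N _ Ii(2)] by simp
    moreover have "min e d \<le> e" by simp
    ultimately show ?thesis using I(3) by linarith
  qed
  show ?thesis
  proof (rule ccontr)
    assume "measure N {c1..c2} \<noteq> 0"
    then have "measure N {c1..c2} > 0" using measure_nonneg[of N "{c1..c2}"] by linarith
    from small[OF this] show False by simp
  qed
qed

lemma measure_convex_hull_C_set_eq_0:
  assumes M: "M \<in> Prob_R" and N: "N \<in> Prob_R"
    and far: "\<forall>e>0. \<exists>I. nondeg_interval I \<and> measure M I > 1 - e \<and> measure N I < e"
  shows "measure N (convex hull (C_set M)) = 0"
  using N convex_hull_C_set_interval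
proof (rule measure_interval_eq_0I)
  fix a b assume ab: "a \<in> convex hull (C_set M)" "b \<in> convex hull (C_set M)"
  obtain c1 where c1: "c1 \<in> C_set M" "c1 \<le> a" by (rule convex_hull_real_between[OF ab(1)])
  obtain c2 where c2: "c2 \<in> C_set M" "b \<le> c2" by (rule convex_hull_real_between[OF ab(2)])
  from c1 c2 have "{a..b} \<subseteq> {c1..c2}" by auto
  then show "measure N {a..b} = 0"
    using Prob_R_measure_eq_0_mono[OF N _ _ measure_between_C_set_points_eq_0[OF M N far c1(1) c2(1)]]
    by simp
qed

lemma Prob_R_limsup_null_sets:
  assumes M: "M \<in> Prob_R" and A: "\<And>n. A n \<in> sets borel" "\<And>n. measure M (A n) < (1/2) ^ n"
  shows "limsup A \<in> null_sets M"
proof (rule borel_cantelli_limsup1)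
  interpret prob_space M using Prob_R_D[OF M] by simp
  show "A n \<in> sets M" for n using A(1) Prob_R_D(2)[OF M] by simp
  show "emeasure M (A n) < \<infinity>" for n by (simp add: less_top[symmetric])
  show "summable (\<lambda>n. measure M (A n))"
    by (rule summable_comparison_test'[OF summable_geometric[of "1/2"], of 0])
      (use A(2) in \<open>auto intro: less_imp_le\<close>)
qed

lemma concentrated_on_null_interval:
  assumes M: "M \<in> Prob_R" and N: "N \<in> Prob_R"
    and far: "\<forall>e>0. \<exists>I. nondeg_interval I \<and> measure N I > 1 - e \<and> measure M I < e"
  obtains J where "is_interval J" "measure M J = 0" "measure N J = 1"
proof -
  have "\<exists>I. nondeg_interval I \<and> measure N I > 1 - (1/2) ^ n \<and> measure M I < (1/2) ^ n" for n :: nat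
    using far by simp
  then obtain I where I: "\<And>n. nondeg_interval (I n)" "\<And>n. measure N (I n) > 1 - (1/2) ^ n"
      "\<And>n. measure M (I n) < (1/2) ^ n"
    by metis
  have Ii: "\<And>n. is_interval (I n)" "\<And>n. I n \<in> sets borel"
    using I(1) real_interval_borel_measurable unfolding nondeg_interval_def by auto
  \<comment> \<open>Borel-Cantelli: the liminf of the I n is charged neither by M nor by the complements
      under N, both having summable masses.\<close>
  define J where "J = (\<Union>m. \<Inter>n\<in>{m..}. I n)"
  have "is_interval J"
  proof (unfold is_interval_1, intro ballI allI impI)
    fix a b x assume "a \<in> J" "b \<in> J" and x: "a \<le> x \<and> x \<le> b"
    then obtain m1 m2 where a: "\<And>n. n \<ge> m1 \<Longrightarrow> a \<in> I n" and b: "\<And>n. n \<ge> m2 \<Longrightarrow> b \<in> I n"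
      unfolding J_def by blast
    have "x \<in> I n" if "n \<ge> max m1 m2" for n
      using mem_is_interval_1_I[OF Ii(1) a b] that x by simp
    then show "x \<in> J" unfolding J_def by blast
  qed
  have J_sets: "J \<in> sets borel" "UNIV - J \<in> sets borel"
    using real_interval_borel_measurable[OF \<open>is_interval J\<close>] by (auto simp: borel_comp)
  have "J \<subseteq> limsup I"
  proof
    fix x assume "x \<in> J"
    then obtain m where m: "\<And>n. n \<ge> m \<Longrightarrow> x \<in> I n" unfolding J_def by blast
    have "x \<in> (\<Union>k\<in>{n..}. I k)" for n using m[of "max n m"] by auto
    then show "x \<in> limsup I" unfolding limsup_INF_SUP by blast
  qed
  then have "measure M J = 0"
    by (rule Prob_R_measure_subset_null_set[OF M _ Prob_R_limsup_null_sets[OF M Ii(2) I(3)] J_sets(1)])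
  moreover have "measure N J = 1"
  proof -
    have "measure N (UNIV - I n) < (1/2) ^ n" for n
      using Prob_R_measure_compl[OF N Ii(2)] I(2)[of n] by simp
    then have null: "limsup (\<lambda>n. UNIV - I n) \<in> null_sets N"
      using Ii(2) by (intro Prob_R_limsup_null_sets[OF N]) auto
    have "UNIV - J \<subseteq> limsup (\<lambda>n. UNIV - I n)"
    proof
      fix x assume "x \<in> UNIV - J"
      then have "x \<in> (\<Union>k\<in>{n..}. UNIV - I k)" for n unfolding J_def by blast
      then show "x \<in> limsup (\<lambda>n. UNIV - I n)" unfolding limsup_INF_SUP by blast
    qed
    then have "measure N (UNIV - J) = 0"
      by (rule Prob_R_measure_subset_null_set[OF N _ null J_sets(2)])
    then show ?thesis using Prob_R_measure_compl[OF N J_sets(1)] by simp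
  qed
  ultimately show ?thesis using that \<open>is_interval J\<close> by blast
qed


lemma d_Ku_eq_1_concentration:
  assumes M: "M \<in> Prob_R" and N: "N \<in> Prob_R" "N \<notin> Dirac_set" and d: "d_Ku M N = 1"
  shows "measure N (UNIV - convex hull (C_set M)) = 1
    \<or> (\<exists>K \<in> components (N_set M). bounded K \<and> measure N K = 1)"
  using d_Ku_eq_1D[OF M N(1) d]
proof
  assume "\<forall>e>0. \<exists>I. nondeg_interval I \<and> measure N I > 1 - e \<and> measure M I < e"
  then obtain J where J: "is_interval J" "measure M J = 0" "measure N J = 1"
    using concentrated_on_null_interval[OF M N(1)] by blast
  have "J \<subseteq> N_set M"
    using nondeg_interval_if_full_measure[OF N J(1,3)] J(2) unfolding N_set_def by blast
  moreover have "J \<noteq> {}" using J(3) by auto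
  moreover have "connected J" using J(1) is_interval_connected_1 by blast
  ultimately obtain K where K: "K \<in> components (N_set M)" "J \<subseteq> K"
    using exists_component_superset[of J "N_set M"] by blast
  have K_sets: "K \<in> sets borel"
    using in_components_connected[OF K(1)] is_interval_connected_1 real_interval_borel_measurable by blast
  show ?thesis
  proof (cases "bounded K")
    case True
    then show ?thesis using K Prob_R_measure_eq_1_mono[OF N(1) K(2) K_sets J(3)] by blast
  next
    case False
    then have "J \<subseteq> UNIV - convex hull (C_set M)"
      using unbounded_component_N_set_disjoint[OF K(1)] K(2) by blast
    moreover have "UNIV - convex hull (C_set M) \<in> sets borel"
      using real_interval_borel_measurable[OF convex_hull_C_set_interval] by (simp add: borel_comp)
    ultimately show ?thesis using Prob_R_measure_eq_1_mono[OF N(1) _ _ J(3)] by blast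
  qed
next
  assume "\<forall>e>0. \<exists>I. nondeg_interval I \<and> measure M I > 1 - e \<and> measure N I < e"
  then have "measure N (convex hull (C_set M)) = 0"
    by (rule measure_convex_hull_C_set_eq_0[OF M N(1)])
  then show ?thesis
    using Prob_R_measure_compl[OF N(1) real_interval_borel_measurable[OF convex_hull_C_set_interval]]
    by simp
qed

lemma d_Ku_eq_1_if_concentration:
  assumes M: "M \<in> Prob_R" "M \<notin> Dirac_set" and N: "N \<in> Prob_R" "N \<notin> Dirac_set"
    and conc: "measure N (UNIV - convex hull (C_set M)) = 1
      \<or> (\<exists>K \<in> components (N_set M). measure N K = 1)"
  shows "d_Ku M N = 1"
  using conc
proof
  let ?H = "convex hull (C_set M)"
  assume "measure N (UNIV - ?H) = 1"
  then have "measure N ?H = 0"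
    using Prob_R_measure_compl[OF N(1) real_interval_borel_measurable[OF convex_hull_C_set_interval]]
    by simp
  moreover have "nondeg_interval ?H"
    by (rule nondeg_interval_if_full_measure[OF M convex_hull_C_set_interval measure_convex_hull_C_set[OF M(1)]])
  ultimately show ?thesis using d_Ku_eq_1I[OF M(1) N(1)] measure_convex_hull_C_set[OF M(1)] by simp
next
  assume "\<exists>K \<in> components (N_set M). measure N K = 1"
  then obtain K where K: "K \<in> components (N_set M)" "measure N K = 1" by blast
  have "is_interval K"
    using in_components_connected[OF K(1)] is_interval_connected_1 by blast
  then have "measure M K = 0"
    using measure_subset_N_set[OF M(1) in_components_subset[OF K(1)]] real_interval_borel_measurable
    by blast
  moreover have "nondeg_interval K" by (rule nondeg_interval_if_full_measure[OF N \<open>is_interval K\<close> K(2)])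
  ultimately show ?thesis using d_Ku_eq_1I[OF M(1) N(1)] K(2) by simp
qed

theorem lemma3p3:
  assumes "\<mu> \<in> Prob_R" and "\<mu> \<notin> Dirac_set"
  shows "unit_sphere_Ku \<mu> - Dirac_set =
      {\<nu> \<in> Prob_R - Dirac_set. measure \<nu> (UNIV - convex hull (C_set \<mu>)) = 1}
      \<union> (\<Union>I \<in> {J \<in> components (N_set \<mu>). bounded J}.
            {\<nu> \<in> Prob_R - Dirac_set. measure \<nu> I = 1})"
proof (rule set_eqI, rule iffI)
  fix \<nu> assume "\<nu> \<in> unit_sphere_Ku \<mu> - Dirac_set"
  then have "\<nu> \<in> Prob_R" "\<nu> \<notin> Dirac_set" "d_Ku \<mu> \<nu> = 1" unfolding unit_sphere_Ku_def by auto
  then show "\<nu> \<in> {\<nu> \<in> Prob_R - Dirac_set. measure \<nu> (UNIV - convex hull (C_set \<mu>)) = 1}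
      \<union> (\<Union>I \<in> {J \<in> components (N_set \<mu>). bounded J}. {\<nu> \<in> Prob_R - Dirac_set. measure \<nu> I = 1})"
    using d_Ku_eq_1_concentration[OF assms(1)] by blast
next
  fix \<nu> assume "\<nu> \<in> {\<nu> \<in> Prob_R - Dirac_set. measure \<nu> (UNIV - convex hull (C_set \<mu>)) = 1}
      \<union> (\<Union>I \<in> {J \<in> components (N_set \<mu>). bounded J}. {\<nu> \<in> Prob_R - Dirac_set. measure \<nu> I = 1})"
  then have "\<nu> \<in> Prob_R" "\<nu> \<notin> Dirac_set"
    "measure \<nu> (UNIV - convex hull (C_set \<mu>)) = 1 \<or> (\<exists>K \<in> components (N_set \<mu>). measure \<nu> K = 1)"
    by auto
  then show "\<nu> \<in> unit_sphere_Ku \<mu> - Dirac_set"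
    using d_Ku_eq_1_if_concentration[OF assms] unfolding unit_sphere_Ku_def by blast
qed

end
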